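(* Let $G$ be a finite simple graph with at least $3$ vertices. If $\delta(G) \ge \widetilde{\alpha}(G)$, then $G$ is Hamiltonian.
   Context: $\delta(G)$ denotes the minimum degree of $G$. For disjoint vertex sets $S,T$, $E(S,T)$ is the set of edges with one end in $S$ and one in $T$. An $(s,t)$-bipartite-hole in $G$ consists of two disjoint sets of vertices $S$ and $T$ with $|S|=s$, $|T|=t$ and $E(S,T)=\emptyset$. The bipartite-hole-number $\widetilde{\alpha}(G)$ is the least integer $r$ which can be written as $r=s+t-1$ for some positive integers $s,t$ such that $G$ contains no $(s,t)$-bipartite-hole. (Equivalently, $\widetilde{\alpha}(G)$ is the maximum integer $r$ such that $G$ contains an $(s,t)$-bipartite-hole for every pair of non-negative integers $s,t$ with $s+t=r$.) *)

theory Defs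
  imports Main
begin

definition simple_graph :: "'a set \<Rightarrow> ('a \<Rightarrow> 'a \<Rightarrow> bool) \<Rightarrow> bool" where
  "simple_graph V E \<longleftrightarrow> finite V \<and> (\<forall>u v. E u v \<longrightarrow> u \<in> V \<and> v \<in> V)
     \<and> (\<forall>u v. E u v \<longrightarrow> E v u) \<and> (\<forall>v. \<not> E v v)"

definition degree :: "'a set \<Rightarrow> ('a \<Rightarrow> 'a \<Rightarrow> bool) \<Rightarrow> 'a \<Rightarrow> nat" where
  "degree V E v = card {u \<in> V. E v u}"

definition min_degree :: "'a set \<Rightarrow> ('a \<Rightarrow> 'a \<Rightarrow> bool) \<Rightarrow> nat" where
  "min_degree V E = Min (degree V E ` V)"

definition has_bip_hole :: "'a set \<Rightarrow> ('a \<Rightarrow> 'a \<Rightarrow> bool) \<Rightarrow> nat \<Rightarrow> nat \<Rightarrow> bool" where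
  "has_bip_hole V E s t \<longleftrightarrow> (\<exists>S T. S \<subseteq> V \<and> T \<subseteq> V \<and> S \<inter> T = {} \<and>
       card S = s \<and> card T = t \<and> (\<forall>x\<in>S. \<forall>y\<in>T. \<not> E x y))"

definition bip_hole_number :: "'a set \<Rightarrow> ('a \<Rightarrow> 'a \<Rightarrow> bool) \<Rightarrow> nat" where
  "bip_hole_number V E = (LEAST r. \<exists>s t. 0 < s \<and> 0 < t \<and> r = s + t - 1 \<and> \<not> has_bip_hole V E s t)"

definition hamiltonian :: "'a set \<Rightarrow> ('a \<Rightarrow> 'a \<Rightarrow> bool) \<Rightarrow> bool" where
  "hamiltonian V E \<longleftrightarrow> (\<exists>vs. distinct vs \<and> set vs = V \<and> 3 \<le> length vs \<and>
       (\<forall>i. Suc i < length vs \<longrightarrow> E (vs ! i) (vs ! Suc i)) \<and> E (last vs) (hd vs))"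

end

theory Submission
  imports Defs
begin

(*
  Let C be a longest cycle. A longest path ends in a vertex all of whose neighbours lie on the
  path, which closes a cycle of length at least \<delta> + 1. Choose s \<le> t with no (s,t)-bipartite-hole
  and s + t - 1 equal to the bipartite-hole-number; then |C| \<ge> \<delta> + 1 \<ge> s + t.
  If C misses a vertex, let Q be a longest path in G - C and N the set of vertices of C with a
  neighbour on Q, k = |N|. The end of Q has all its neighbours in N \<union> Q, hence
  s + t \<le> k + |Q|. Maximality of C forces the successors N\<^sup>+ of N on C to be pairwise
  non-adjacent and without neighbours on Q. So if s \<le> k, an s-subset of N\<^sup>+ against the rest
  of N\<^sup>+ together with Q is an (s,t)-bipartite-hole; if s > k, then Q against C - N is one.
*)

definition is_path :: "'a set \<Rightarrow> ('a \<Rightarrow> 'a \<Rightarrow> bool) \<Rightarrow> 'a list \<Rightarrow> bool" where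
  "is_path V E xs \<longleftrightarrow> xs \<noteq> [] \<and> distinct xs \<and> set xs \<subseteq> V \<and> successively E xs"

definition is_cycle :: "'a set \<Rightarrow> ('a \<Rightarrow> 'a \<Rightarrow> bool) \<Rightarrow> 'a list \<Rightarrow> bool" where
  "is_cycle V E xs \<longleftrightarrow>
     distinct xs \<and> 3 \<le> length xs \<and> set xs \<subseteq> V \<and> successively E xs \<and> E (last xs) (hd xs)"

lemma simple_graphD:
  assumes "simple_graph V E"
  shows "finite V" and "E u v \<Longrightarrow> E v u" and "\<not> E v v"
  using assms by (auto simp: simple_graph_def)

lemma ex_longest:
  assumes "P xs" and "\<And>ys. P ys \<Longrightarrow> length ys \<le> b"
  obtains ys where "P ys" and "\<And>zs. P zs \<Longrightarrow> length zs \<le> length ys"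
  using ex_has_greatest_nat[of P xs length "Suc b"] assms by (metis le_imp_less_Suc)

lemma is_path_length_le: "finite V \<Longrightarrow> is_path V E xs \<Longrightarrow> length xs \<le> card V"
  by (metis card_mono distinct_card is_path_def)

lemma is_cycle_length_le: "finite V \<Longrightarrow> is_cycle V E xs \<Longrightarrow> length xs \<le> card V"
  by (metis card_mono distinct_card is_cycle_def)

lemma successively_rotate1_closed:
  assumes "successively E xs" and "E (last xs) (hd xs)"
  shows "successively E (rotate1 xs) \<and> E (last (rotate1 xs)) (hd (rotate1 xs))"
proof (cases xs)
  case (Cons x ys)
  show ?thesis
  proof (cases "ys = []")
    case False
    then have "E x (hd ys)" "successively E ys" "E (last ys) x"
      using assms Cons by (simp_all add: successively_Cons)
    then show ?thesis using Cons False by (simp add: successively_append_iff)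
  qed (use assms Cons in simp)
qed (use assms in simp)

lemma is_cycle_rotate: "is_cycle V E vs \<Longrightarrow> is_cycle V E (rotate m vs)"
proof (induction m)
  case (Suc m)
  then show ?case
    using successively_rotate1_closed[of E "rotate m vs"] by (simp add: is_cycle_def)
qed simp

lemma last_rotate_Suc: "i < length vs \<Longrightarrow> last (rotate (Suc i) vs) = vs ! i"
proof -
  assume i: "i < length vs"
  then have "last (rotate (Suc i) vs) = rotate (Suc i) vs ! (length vs - 1)"
    by (metis last_conv_nth length_rotate list.size(3) not_less0)
  also have "\<dots> = vs ! ((Suc i + (length vs - 1)) mod length vs)"
    using i by (simp add: nth_rotate del: rotate_Suc)
  also have "Suc i + (length vs - 1) = i + length vs" using i by simp
  finally show ?thesis using i by simp
qed

lemma rotate_Suc_split: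
  assumes i: "i < length vs" and j: "j < length vs" and "i \<noteq> j"
  obtains xs ys where "rotate (Suc i) vs = xs @ ys" "xs \<noteq> []" "ys \<noteq> []"
    "hd xs = vs ! (Suc i mod length vs)" "last xs = vs ! j"
    "hd ys = vs ! (Suc j mod length vs)" "last ys = vs ! i"
proof -
  let ?n = "length vs"
  define ws where "ws = rotate (Suc i) vs"
  define m where "m = (j + ?n - Suc i) mod ?n"
  have ws_nth: "ws ! k = vs ! ((Suc i + k) mod ?n)" if "k < ?n" for k
    using that by (simp add: ws_def nth_rotate del: rotate_Suc)
  have m: "m < ?n" unfolding m_def using i by (intro mod_less_divisor) auto
  have "(Suc i + m) mod ?n = (Suc i + (j + ?n - Suc i)) mod ?n"
    unfolding m_def by (rule mod_add_right_eq)
  also have "Suc i + (j + ?n - Suc i) = j + ?n" using i by simp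
  also have "(j + ?n) mod ?n = j" using j by simp
  finally have jm: "(Suc i + m) mod ?n = j" .
  have "m \<noteq> ?n - 1"
  proof
    assume "m = ?n - 1"
    then have "Suc i + m = i + ?n" using i by simp
    then have "(Suc i + m) mod ?n = i" using i by (metis mod_add_self2 mod_less)
    then show False using jm \<open>i \<noteq> j\<close> by simp
  qed
  then have sm: "Suc m < ?n" using m by simp
  have "(Suc i + Suc m) mod ?n = Suc j mod ?n"
    using jm by (metis add_Suc_right mod_Suc_eq)
  then have "ws ! Suc m = vs ! (Suc j mod ?n)" using ws_nth[OF sm] by simp
  moreover have "ws ! m = vs ! j" using ws_nth[OF m] jm by simp
  moreover have "hd ws = vs ! (Suc i mod ?n)" "last ws = vs ! i"
    using hd_rotate_conv_nth[of vs "Suc i"] last_rotate_Suc[OF i] i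
    unfolding ws_def by fastforce+
  moreover have "length ws = ?n" by (simp add: ws_def)
  ultimately show thesis
  proof (intro that[of "take (Suc m) ws" "drop (Suc m) ws"])
    show "last (take (Suc m) ws) = vs ! j"
      using sm \<open>ws ! m = vs ! j\<close> \<open>length ws = ?n\<close> by (simp add: take_Suc_conv_app_nth)
  qed (use sm in \<open>auto simp: ws_def hd_drop_conv_nth simp del: rotate_Suc\<close>)
qed

lemma successively_rev_sym:
  assumes "\<And>u v. E u v \<Longrightarrow> E v u" and "successively E xs"
  shows "successively E (rev xs)"
  unfolding successively_rev using assms(2) by (rule successively_mono) (rule assms(1))

lemma is_path_rev:
  assumes "\<And>u v. E u v \<Longrightarrow> E v u" and "is_path V E xs"
  shows "is_path V E (rev xs)"
  using assms(2) successively_rev_sym[OF assms(1)] by (auto simp: is_path_def)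

lemma successively_take_drop:
  assumes "successively P xs"
  shows "successively P (take k xs)" and "successively P (drop k xs)"
  using assms successively_append_iff[of P "take k xs" "drop k xs"] by auto

lemma is_path_segment:
  assumes "is_path V E Q" and "i \<le> j" and "j < length Q"
  shows "is_path V E (drop i (take (Suc j) Q))"
    and "hd (drop i (take (Suc j) Q)) = Q ! i" and "last (drop i (take (Suc j) Q)) = Q ! j"
proof -
  let ?R = "drop i (take (Suc j) Q)"
  have "successively E ?R"
    using assms(1) by (simp add: is_path_def successively_take_drop)
  moreover have "set ?R \<subseteq> set Q" by (meson order.trans set_drop_subset set_take_subset)
  ultimately show "is_path V E ?R" using assms by (auto simp: is_path_def)
  show "hd ?R = Q ! i" using assms(2,3) by (simp add: hd_drop_conv_nth)
  show "last ?R = Q ! j"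
    using assms(2,3) by (simp add: last_drop take_Suc_conv_app_nth)
qed

lemma is_path_between:
  assumes sym: "\<And>u v. E u v \<Longrightarrow> E v u" and Q: "is_path V E Q"
    and "z1 \<in> set Q" and "z2 \<in> set Q"
  obtains R where "is_path V E R" "set R \<subseteq> set Q" "hd R = z1" "last R = z2"
proof -
  obtain i j where ij: "i < length Q" "Q ! i = z1" "j < length Q" "Q ! j = z2"
    using assms(3,4) by (metis in_set_conv_nth)
  have segment_sub: "set (drop a (take (Suc b) Q)) \<subseteq> set Q" for a b
    by (meson order.trans set_drop_subset set_take_subset)
  show thesis
  proof (cases "i \<le> j")
    case True
    then show thesis using that is_path_segment[OF Q True ij(3)] segment_sub ij by blast
  next
    case False
    let ?R = "drop j (take (Suc i) Q)"
    have "is_path V E (rev ?R)" using is_path_rev[OF sym is_path_segment(1)[OF Q _ ij(1)]] False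
      by simp
    moreover have "hd (rev ?R) = z1" "last (rev ?R) = z2"
      using is_path_segment(2,3)[OF Q _ ij(1), of j] False ij
      by (auto simp: hd_rev last_rev)
    ultimately show thesis using that segment_sub by (metis set_rev)
  qed
qed

lemma is_cycle_append_path:
  assumes "is_cycle V E ws" and "is_path V E R" and "set R \<inter> set ws = {}"
    and "E (last ws) (hd R)" and "E (last R) (hd ws)"
  shows "is_cycle V E (ws @ R)"
proof -
  have "ws \<noteq> []" using assms(1) by (auto simp: is_cycle_def)
  then show ?thesis using assms by (auto simp: is_cycle_def is_path_def successively_append_iff)
qed

lemma is_cycle_reroute:
  assumes sym: "\<And>u v. E u v \<Longrightarrow> E v u"
    and "is_cycle V E (xs @ ys)" and "xs \<noteq> []" and "ys \<noteq> []"
    and "is_path V E R" and "set R \<inter> set (xs @ ys) = {}"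
    and "E (last R) (last xs)" and "E (hd xs) (hd ys)" and "E (last ys) (hd R)"
  shows "is_cycle V E (R @ rev xs @ ys)"
proof -
  have xs: "successively E xs" and ys: "successively E ys"
    using assms(2) by (auto simp: is_cycle_def successively_append_iff)
  have "successively E (rev xs @ ys)"
    using assms(3,4,8) successively_rev_sym[OF sym xs] ys
    by (auto simp: successively_append_iff last_rev)
  then show ?thesis
    using assms(2-7,9) by (auto simp: is_cycle_def is_path_def successively_append_iff hd_rev)
qed

lemma is_path_mono: "V \<subseteq> W \<Longrightarrow> is_path V E xs \<Longrightarrow> is_path W E xs"
  by (auto simp: is_path_def)

lemma inj_on_cyclic_succ_nth:
  "distinct vs \<Longrightarrow> inj_on (\<lambda>i. vs ! (Suc i mod length vs)) {..<length vs}"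
proof (rule inj_onI)
  fix i j
  assume "distinct vs" and ij: "i \<in> {..<length vs}" "j \<in> {..<length vs}"
    and "vs ! (Suc i mod length vs) = vs ! (Suc j mod length vs)"
  moreover have "0 < length vs" using ij by auto
  ultimately have "Suc i mod length vs = Suc j mod length vs" by (simp add: nth_eq_iff_index_eq)
  then show "i = j" using ij by (auto simp: mod_Suc split: if_splits)
qed

lemma longest_cycle_succ_not_adj_path:
  assumes sym: "\<And>u v. E u v \<Longrightarrow> E v u"
    and vs: "is_cycle V E vs" and longest: "\<And>ws. is_cycle V E ws \<Longrightarrow> length ws \<le> length vs"
    and Q: "is_path (V - set vs) E Q"
    and i: "i < length vs" and "z1 \<in> set Q" "E (vs ! i) z1" and "z2 \<in> set Q"
  shows "\<not> E (vs ! (Suc i mod length vs)) z2"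
proof
  assume adj: "E (vs ! (Suc i mod length vs)) z2"
  let ?ws = "rotate (Suc i) vs"
  obtain R where R: "is_path (V - set vs) E R" "set R \<subseteq> set Q" "hd R = z1" "last R = z2"
    using is_path_between[OF sym Q] assms(6,8) by blast
  have "is_cycle V E (?ws @ R)"
  proof (rule is_cycle_append_path)
    show "is_cycle V E ?ws" by (rule is_cycle_rotate[OF vs])
    show "is_path V E R" using R(1) by (rule is_path_mono[rotated]) blast
    show "set R \<inter> set ?ws = {}" using R(1) by (auto simp: is_path_def)
    show "E (last ?ws) (hd R)" using last_rotate_Suc[OF i] R(3) assms(7) by simp
    show "E (last R) (hd ?ws)"
      using hd_rotate_conv_nth[of vs "Suc i"] i sym[OF adj] R(4) by fastforce
  qed
  then have "length (?ws @ R) \<le> length vs" by (rule longest)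
  then show False using R(1) by (simp add: is_path_def)
qed

lemma longest_cycle_succs_not_adj:
  assumes sym: "\<And>u v. E u v \<Longrightarrow> E v u"
    and vs: "is_cycle V E vs" and longest: "\<And>ws. is_cycle V E ws \<Longrightarrow> length ws \<le> length vs"
    and Q: "is_path (V - set vs) E Q"
    and i: "i < length vs" and j: "j < length vs" and "i \<noteq> j"
    and "z1 \<in> set Q" "E (vs ! i) z1" and "z2 \<in> set Q" "E (vs ! j) z2"
  shows "\<not> E (vs ! (Suc i mod length vs)) (vs ! (Suc j mod length vs))"
proof
  assume adj: "E (vs ! (Suc i mod length vs)) (vs ! (Suc j mod length vs))"
  obtain xs ys where split: "rotate (Suc i) vs = xs @ ys" "xs \<noteq> []" "ys \<noteq> []"
    "hd xs = vs ! (Suc i mod length vs)" "last xs = vs ! j"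
    "hd ys = vs ! (Suc j mod length vs)" "last ys = vs ! i"
    using rotate_Suc_split[OF i j \<open>i \<noteq> j\<close>] by blast
  obtain R where R: "is_path (V - set vs) E R" "set R \<subseteq> set Q" "hd R = z1" "last R = z2"
    using is_path_between[OF sym Q] assms(8,10) by blast
  have "is_cycle V E (R @ rev xs @ ys)"
  proof (rule is_cycle_reroute[OF sym])
    show "is_cycle V E (xs @ ys)" using is_cycle_rotate[OF vs] split(1) by metis
    show "is_path V E R" using R(1) by (rule is_path_mono[rotated]) blast
    show "set R \<inter> set (xs @ ys) = {}" using R(1) split(1)[symmetric] by (auto simp: is_path_def)
  qed (use split R assms(9,11) adj sym[of _ "last R"] in auto)
  then have "length (R @ rev xs @ ys) \<le> length vs" by (rule longest)
  moreover have "length (xs @ ys) = length vs" using split(1) by (metis length_rotate)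
  ultimately show False using R(1) by (simp add: is_path_def)
qed

lemma has_bip_holeI:
  assumes "S \<subseteq> V" and "T \<subseteq> V" and "S \<inter> T = {}"
    and "\<And>x y. x \<in> S \<Longrightarrow> y \<in> T \<Longrightarrow> \<not> E x y" and "p \<le> card S" and "q \<le> card T"
  shows "has_bip_hole V E p q"
proof -
  obtain S' where S': "S' \<subseteq> S" "card S' = p" using obtain_subset_with_card_n[OF assms(5)] by metis
  obtain T' where T': "T' \<subseteq> T" "card T' = q" using obtain_subset_with_card_n[OF assms(6)] by metis
  have "S' \<subseteq> V" "T' \<subseteq> V" "S' \<inter> T' = {}" "\<forall>x\<in>S'. \<forall>y\<in>T'. \<not> E x y"
    using S'(1) T'(1) assms(1-4) by blast+
  then show ?thesis unfolding has_bip_hole_def using S'(2) T'(2) by blast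
qed

lemma has_bip_hole_swap:
  assumes "\<And>u v. E u v \<Longrightarrow> E v u" and "has_bip_hole V E s t"
  shows "has_bip_hole V E t s"
proof -
  obtain S T where "S \<subseteq> V" "T \<subseteq> V" "S \<inter> T = {}" "card S = s" "card T = t"
    and "\<forall>x\<in>S. \<forall>y\<in>T. \<not> E x y"
    using assms(2) unfolding has_bip_hole_def by blast
  then show ?thesis
    unfolding has_bip_hole_def using assms(1) by (intro exI[of _ T] exI[of _ S]) blast
qed

lemma bip_hole_number_witness:
  assumes "finite V" and "\<And>u v. E u v \<Longrightarrow> E v u"
  obtains p q where "0 < p" and "p \<le> q" and "p + q = bip_hole_number V E + 1"
    and "\<not> has_bip_hole V E p q"
proof -
  let ?P = "\<lambda>r. \<exists>s t. 0 < s \<and> 0 < t \<and> r = s + t - 1 \<and> \<not> has_bip_hole V E s t"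
  have "\<not> has_bip_hole V E (Suc (card V)) 1"
    using card_mono[OF assms(1)] by (fastforce simp: has_bip_hole_def)
  then have "?P (Suc (card V))" by fastforce
  then have "?P (bip_hole_number V E)" unfolding bip_hole_number_def by (rule LeastI)
  then obtain s t where "0 < s" "0 < t" "bip_hole_number V E = s + t - 1" "\<not> has_bip_hole V E s t"
    by blast
  then show thesis
    using that[of "min s t" "max s t"] has_bip_hole_swap[of E V t s, OF assms(2)]
    by (cases "s \<le> t") (auto simp: min_def max_def)
qed

lemma degree_ge_if_no_bip_hole_1_1:
  assumes "finite V" and "\<not> has_bip_hole V E 1 1" and "v \<in> V"
  shows "card V - 1 \<le> degree V E v"
proof -
  have "V - {v} \<subseteq> {u \<in> V. E v u}"
  proof
    fix u assume u: "u \<in> V - {v}"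
    show "u \<in> {u \<in> V. E v u}"
    proof (rule ccontr)
      assume "u \<notin> {u \<in> V. E v u}"
      then have "has_bip_hole V E 1 1"
        using u assms(3) by (intro has_bip_holeI[of "{v}" V "{u}"]) auto
      with assms(2) show False by contradiction
    qed
  qed
  then show ?thesis
    using assms(1,3) card_mono[of "{u \<in> V. E v u}" "V - {v}"] by (simp add: degree_def)
qed

lemma min_degree_le_degree: "finite V \<Longrightarrow> v \<in> V \<Longrightarrow> min_degree V E \<le> degree V E v"
  by (simp add: min_degree_def)

lemma two_le_min_degree:
  assumes G: "simple_graph V E" and "3 \<le> card V" and "bip_hole_number V E \<le> min_degree V E"
  shows "2 \<le> min_degree V E"
proof (cases "2 \<le> bip_hole_number V E")
  case False
  have fin: "finite V" using simple_graphD(1)[OF G] .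
  obtain p q where pq: "0 < p" "p \<le> q" "p + q = bip_hole_number V E + 1"
    and no_hole: "\<not> has_bip_hole V E p q"
    by (rule bip_hole_number_witness[OF fin simple_graphD(2)[OF G]])
  from pq False have "p = 1" and "q = 1" by linarith+
  with no_hole have no_hole_1_1: "\<not> has_bip_hole V E 1 1" by simp
  obtain v where "v \<in> V" "min_degree V E = degree V E v"
    unfolding min_degree_def using fin assms(2) Min_in[of "degree V E ` V"] by fastforce
  then show ?thesis
    using degree_ge_if_no_bip_hole_1_1[OF fin no_hole_1_1] assms(2) by fastforce
qed (use assms(3) in simp)

text \<open>Attachments are positions on the cycle, so that their successors
  \<open>vs ! (Suc i mod length vs)\<close> are at hand.\<close>

definition attachments :: "('a \<Rightarrow> 'a \<Rightarrow> bool) \<Rightarrow> 'a list \<Rightarrow> 'a list \<Rightarrow> nat set" where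
  "attachments E vs Q = {i. i < length vs \<and> (\<exists>z\<in>set Q. E (vs ! i) z)}"

lemma attachments_subset: "attachments E vs Q \<subseteq> {..<length vs}"
  by (auto simp: attachments_def)

lemma finite_attachments: "finite (attachments E vs Q)"
  using attachments_subset by (rule finite_subset) simp

lemma longest_path_hd_adj:
  assumes sym: "\<And>u v. E u v \<Longrightarrow> E v u"
    and Q: "is_path W E Q" and longest: "\<And>R. is_path W E R \<Longrightarrow> length R \<le> length Q"
    and "E (hd Q) u" and "u \<in> W"
  shows "u \<in> set Q"
proof (rule ccontr)
  assume "u \<notin> set Q"
  then have "is_path W E (u # Q)"
    using Q assms(5) sym[OF assms(4)] by (auto simp: is_path_def successively_Cons)
  then show False using longest[of "u # Q"] by simp
qed

lemma degree_hd_longest_path_outside: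
  assumes G: "simple_graph V E" and Q: "is_path (V - set vs) E Q"
    and longest: "\<And>R. is_path (V - set vs) E R \<Longrightarrow> length R \<le> length Q"
  shows "degree V E (hd Q) + 1 \<le> card (attachments E vs Q) + length Q"
proof -
  let ?y = "hd Q" and ?N = "attachments E vs Q"
  have y: "?y \<in> set Q" using Q by (simp add: is_path_def)
  have "{u \<in> V. E ?y u} \<subseteq> (!) vs ` ?N \<union> (set Q - {?y})"
  proof
    fix u assume u: "u \<in> {u \<in> V. E ?y u}"
    show "u \<in> (!) vs ` ?N \<union> (set Q - {?y})"
    proof (cases "u \<in> set vs")
      case True
      then obtain i where i: "i < length vs" "vs ! i = u" by (metis in_set_conv_nth)
      then have "i \<in> ?N" using u y simple_graphD(2)[OF G, of ?y u] by (auto simp: attachments_def)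
      then show ?thesis using i(2) by (metis UnI1 image_eqI)
    next
      case False
      then have "u \<in> set Q"
        using longest_path_hd_adj[OF simple_graphD(2)[OF G] Q longest] u by blast
      moreover have "u \<noteq> ?y" using u simple_graphD(3)[OF G] by blast
      ultimately show ?thesis by blast
    qed
  qed
  then have "degree V E ?y \<le> card ((!) vs ` ?N \<union> (set Q - {?y}))"
    unfolding degree_def
    by (rule card_mono[rotated]) (simp add: finite_attachments)
  also have "\<dots> \<le> card ((!) vs ` ?N) + card (set Q - {?y})" by (rule card_Un_le)
  also have "\<dots> \<le> card ?N + (length Q - 1)"
    using card_image_le[OF finite_attachments] Q y
    by (simp add: is_path_def distinct_card)
  finally show ?thesis using Q by (cases Q) (auto simp: is_path_def)
qed

lemma bip_hole_at_attachment_succs: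
  assumes G: "simple_graph V E" and vs: "is_cycle V E vs"
    and longest: "\<And>ws. is_cycle V E ws \<Longrightarrow> length ws \<le> length vs"
    and Q: "is_path (V - set vs) E Q"
    and "p \<le> card (attachments E vs Q)" and "p + q \<le> card (attachments E vs Q) + length Q"
  shows "has_bip_hole V E p q"
proof -
  let ?N = "attachments E vs Q" and ?succ = "\<lambda>i. vs ! (Suc i mod length vs)"
  have sym: "\<And>u v. E u v \<Longrightarrow> E v u" using simple_graphD(2)[OF G] .
  have "distinct vs" using vs by (simp add: is_cycle_def)
  then have "inj_on ?succ ?N"
    by (rule inj_on_subset[OF inj_on_cyclic_succ_nth attachments_subset])
  then have card_succs: "card (?succ ` ?N) = card ?N" by (rule card_image)
  obtain S where S: "S \<subseteq> ?succ ` ?N" "card S = p"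
    using obtain_subset_with_card_n[of p "?succ ` ?N"] assms(5) card_succs by metis
  define T where "T = (?succ ` ?N - S) \<union> set Q"
  have succs_on_cycle: "?succ ` ?N \<subseteq> set vs"
    using vs by (auto simp: is_cycle_def intro!: nth_mem mod_less_divisor)
  have disj: "(?succ ` ?N - S) \<inter> set Q = {}" using succs_on_cycle Q by (auto simp: is_path_def)
  have fin_succs: "finite (?succ ` ?N)" using finite_attachments by blast
  have "card T = card ?N - p + length Q"
    unfolding T_def
    using card_Un_disjoint[OF _ _ disj] card_Diff_subset[OF finite_subset[OF S(1) fin_succs] S(1)]
      fin_succs S(2) card_succs Q by (simp add: is_path_def distinct_card)
  then have "q \<le> card T" using assms(5,6) by simp
  moreover have "\<not> E a b" if a: "a \<in> S" and b: "b \<in> T" for a b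
  proof -
    obtain i z1 where i: "i < length vs" "a = ?succ i" "z1 \<in> set Q" "E (vs ! i) z1"
      using a S(1) by (auto simp: attachments_def)
    show ?thesis
    proof (cases "b \<in> set Q")
      case True
      then show ?thesis
        using longest_cycle_succ_not_adj_path[OF sym vs longest Q i(1,3,4)] i(2) by simp
    next
      case False
      then have "b \<in> ?succ ` ?N" "b \<notin> S" using b by (auto simp: T_def)
      then obtain j z2 where j: "j < length vs" "b = ?succ j" "z2 \<in> set Q" "E (vs ! j) z2"
        by (auto simp: attachments_def)
      have "i \<noteq> j" using a \<open>b \<notin> S\<close> i(2) j(2) by auto
      then show ?thesis
        using longest_cycle_succs_not_adj[OF sym vs longest Q i(1) j(1) _ i(3,4) j(3,4)] i(2) j(2)
        by simp
    qed
  qed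
  moreover have "S \<subseteq> V" "T \<subseteq> V" "S \<inter> T = {}"
    using S(1) succs_on_cycle vs Q by (auto simp: T_def is_cycle_def is_path_def)
  ultimately show ?thesis using S(2) by (intro has_bip_holeI[of S V T]) auto
qed

lemma bip_hole_at_non_attachments:
  assumes sym: "\<And>u v. E u v \<Longrightarrow> E v u" and vs: "is_cycle V E vs"
    and Q: "is_path (V - set vs) E Q"
    and "p \<le> length Q" and "q + card (attachments E vs Q) \<le> length vs"
  shows "has_bip_hole V E p q"
proof -
  let ?N = "attachments E vs Q"
  define T where "T = set vs - (!) vs ` ?N"
  have "(!) vs ` ?N \<subseteq> set vs" using attachments_subset by (auto intro!: nth_mem)
  then have "card T = length vs - card ((!) vs ` ?N)"
    using vs by (simp add: T_def card_Diff_subset finite_attachments is_cycle_def distinct_card)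
  then have "q \<le> card T" using card_image_le[OF finite_attachments, of "(!) vs" E vs Q] assms(5)
    by linarith
  moreover have "\<not> E a b" if "a \<in> set Q" and "b \<in> T" for a b
  proof
    assume "E a b"
    obtain i where "i < length vs" "vs ! i = b" using \<open>b \<in> T\<close> by (metis DiffD1 T_def in_set_conv_nth)
    then have "i \<in> ?N" using \<open>a \<in> set Q\<close> sym[OF \<open>E a b\<close>] by (auto simp: attachments_def)
    then show False using \<open>b \<in> T\<close> \<open>vs ! i = b\<close> by (auto simp: T_def)
  qed
  moreover have "set Q \<subseteq> V" "T \<subseteq> V" "set Q \<inter> T = {}" "p \<le> card (set Q)"
    using vs Q assms(4) by (auto simp: T_def is_cycle_def is_path_def distinct_card)
  ultimately show ?thesis by (intro has_bip_holeI[of "set Q" V T]) auto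
qed

lemma longest_cycle_spanning:
  assumes G: "simple_graph V E" and vs: "is_cycle V E vs"
    and longest: "\<And>ws. is_cycle V E ws \<Longrightarrow> length ws \<le> length vs"
    and no_hole: "\<not> has_bip_hole V E p q" and "p \<le> q" and "p + q \<le> length vs"
    and deg: "\<And>v. v \<in> V \<Longrightarrow> p + q \<le> degree V E v + 1"
  shows "set vs = V"
proof (rule ccontr)
  assume "set vs \<noteq> V"
  then obtain x where "x \<in> V - set vs" using vs by (auto simp: is_cycle_def)
  then have "is_path (V - set vs) E [x]" by (simp add: is_path_def)
  moreover have "finite (V - set vs)" using simple_graphD(1)[OF G] by simp
  ultimately obtain Q where Q: "is_path (V - set vs) E Q"
    and longest_Q: "\<And>R. is_path (V - set vs) E R \<Longrightarrow> length R \<le> length Q"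
    using ex_longest is_path_length_le by metis
  let ?k = "card (attachments E vs Q)"
  have "hd Q \<in> V" using Q by (metis Diff_subset hd_in_set is_path_def subset_iff)
  then have "p + q \<le> ?k + length Q"
    using deg degree_hd_longest_path_outside[OF G Q longest_Q] by fastforce
  then have "has_bip_hole V E p q"
  proof (cases "p \<le> ?k")
    case True
    then show ?thesis
      using bip_hole_at_attachment_succs[OF G vs longest Q] \<open>p + q \<le> ?k + length Q\<close> by blast
  next
    case False
    then show ?thesis
      using bip_hole_at_non_attachments[OF simple_graphD(2)[OF G] vs Q]
        \<open>p + q \<le> ?k + length Q\<close> \<open>p \<le> q\<close> assms(6) by simp
  qed
  with no_hole show False by contradiction
qed

lemma long_cycle_exists:
  assumes G: "simple_graph V E" and "V \<noteq> {}"
    and deg: "\<And>v. v \<in> V \<Longrightarrow> d \<le> degree V E v" and "2 \<le> d"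
  obtains vs where "is_cycle V E vs" and "d + 1 \<le> length vs"
proof -
  have sym: "\<And>u v. E u v \<Longrightarrow> E v u" using simple_graphD(2)[OF G] .
  obtain v where "v \<in> V" using assms(2) by blast
  then have "is_path V E [v]" by (simp add: is_path_def)
  then obtain P where P: "is_path V E P" and longest: "\<And>R. is_path V E R \<Longrightarrow> length R \<le> length P"
    using ex_longest is_path_length_le simple_graphD(1)[OF G] by metis
  let ?y = "hd P"
  define J where "J = {j. j < length P \<and> E ?y (P ! j)}"
  have P0: "P ! 0 = ?y" using P by (simp add: is_path_def hd_conv_nth)
  have fin_J: "finite J" by (simp add: J_def)
  have "?y \<in> V" using P by (metis hd_in_set is_path_def subsetD)
  have "{u \<in> V. E ?y u} \<subseteq> (!) P ` J"
  proof
    fix u assume u: "u \<in> {u \<in> V. E ?y u}"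
    then have "u \<in> set P" using longest_path_hd_adj[OF sym P longest] by blast
    then show "u \<in> (!) P ` J" using u by (auto simp: J_def in_set_conv_nth)
  qed
  have "d \<le> degree V E ?y" using deg \<open>?y \<in> V\<close> .
  also have "\<dots> \<le> card ((!) P ` J)"
    unfolding degree_def using fin_J \<open>{u \<in> V. E ?y u} \<subseteq> (!) P ` J\<close> by (intro card_mono) auto
  also have "\<dots> \<le> card J" using fin_J by (rule card_image_le)
  finally have "d \<le> card J" .
  then have "J \<noteq> {}" using assms(4) by auto
  define j where "j = Max J"
  have j: "j < length P" "E ?y (P ! j)" using Max_in[OF fin_J \<open>J \<noteq> {}\<close>] by (simp_all add: j_def J_def)
  have "J \<subseteq> {1..j}"
  proof
    fix i assume "i \<in> J"
    then have "i \<le> j" using fin_J by (simp add: j_def)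
    moreover have "i \<noteq> 0" using \<open>i \<in> J\<close> P0 simple_graphD(3)[OF G] by (metis (mono_tags) J_def mem_Collect_eq)
    ultimately show "i \<in> {1..j}" by simp
  qed
  then have "d \<le> j" using \<open>d \<le> card J\<close> card_mono[of "{1..j}" J] by simp
  let ?C = "take (Suc j) P"
  have "is_cycle V E ?C"
    unfolding is_cycle_def
  proof (intro conjI)
    show "distinct ?C" using P by (simp add: is_path_def)
    show "3 \<le> length ?C" using j(1) \<open>d \<le> j\<close> assms(4) by simp
    show "set ?C \<subseteq> V" using P by (metis is_path_def order.trans set_take_subset)
    show "successively E ?C" using P by (simp add: is_path_def successively_take_drop)
    have "last ?C = P ! j" using j(1) by (simp add: take_Suc_conv_app_nth)
    moreover have "hd ?C = ?y" by simp
    ultimately show "E (last ?C) (hd ?C)" using sym[OF j(2)] by simp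
  qed
  moreover have "length ?C = Suc j" using j(1) by simp
  ultimately show thesis using that \<open>d \<le> j\<close> by simp
qed

lemma hamiltonian_if_spanning_cycle: "is_cycle V E vs \<Longrightarrow> set vs = V \<Longrightarrow> hamiltonian V E"
  unfolding hamiltonian_def is_cycle_def successively_conv_nth by blast

theorem theorem2:
  fixes V :: "'a set" and E :: "'a \<Rightarrow> 'a \<Rightarrow> bool"
  assumes "simple_graph V E"
    and "card V \<ge> 3"
    and "min_degree V E \<ge> bip_hole_number V E"
  shows "hamiltonian V E"
proof -
  let ?\<delta> = "min_degree V E"
  have fin: "finite V" using simple_graphD(1)[OF assms(1)] .
  obtain p q where "0 < p" "p \<le> q" and pq: "p + q = bip_hole_number V E + 1"
    and no_hole: "\<not> has_bip_hole V E p q"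
    by (rule bip_hole_number_witness[OF fin simple_graphD(2)[OF assms(1)]])
  have deg: "?\<delta> \<le> degree V E v" if "v \<in> V" for v using fin that by (rule min_degree_le_degree)
  have "V \<noteq> {}" using assms(2) by auto
  obtain c where c: "is_cycle V E c" and "?\<delta> + 1 \<le> length c"
    by (rule long_cycle_exists[OF assms(1) \<open>V \<noteq> {}\<close> deg two_le_min_degree[OF assms]])
  obtain vs where vs: "is_cycle V E vs"
    and longest: "\<And>ws. is_cycle V E ws \<Longrightarrow> length ws \<le> length vs"
    using ex_longest is_cycle_length_le[OF fin] c by metis
  have "?\<delta> + 1 \<le> length vs" using \<open>?\<delta> + 1 \<le> length c\<close> longest[OF c] by linarith
  have "set vs = V"
    by (rule longest_cycle_spanning[OF assms(1) vs longest no_hole \<open>p \<le> q\<close>])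
      (use pq assms(3) deg \<open>?\<delta> + 1 \<le> length vs\<close> in \<open>force+\<close>)
  with vs show ?thesis by (rule hamiltonian_if_spanning_cycle)
qed

end
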